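(* In the MLR-DMPC setting described in the context, fix a CU $w$, a UAV $i\in\mathcal A$ and a round $k$. If, after the update procedure of round $k$, the information tracker $\mathcal D_{iw}(k)$ is not marked deprecated, then $\mathcal D_{iw}(k)$ contains the true reference trajectory $\hat p_i$ that UAV $i$ is following.
   Context: Setting (MLR-DMPC). There are $N$ UAVs indexed by $\mathcal A=\{1,\dots,N\}$ and $M$ compute units (CUs) indexed by $w\in\{1,\dots,M\}$, $1<M<N$. Time is divided into rounds $k=0,1,2,\dots$ of length $T>0$; each round consists of a computation phase followed by a communication phase in which every device broadcasts at most one message; any message may be lost at any receiver (arbitrary message loss). Nominal model: each UAV $i$ has a nominal system $\dot{\hat x}_i=\hat f_i(\hat x_i,\hat u_i)$, $\hat x_i\in\hat{\mathcal X}$, $\hat u_i\in\hat{\mathcal U}$, with nominal position $\hat p_i=\hat g_{p,i}(\hat x_i)\in\mathbb R^3$. Reference trajectories: in round $k$ UAV $i$ follows a reference $\hat x_i(\tau|k),\hat u_i(\tau|k)$, $\tau\ge 0$, applied at time $t=kT+\tau$. If in the communication phase of round $k$ UAV $i$ receives a trajectory $\hat u_{i,w}(\cdot|k)$ computed by CU $w$, then $\hat u_i(\tau|k+1)=\hat u_{i,w}(\tau+T|k)$; otherwise $\hat u_i(\tau|k+1)=\hat u_i(\tau+T|k)$. Each UAV broadcasts a message containing the metadata (computing CU and round) of the trajectory it currently follows. Information trackers: each CU $w$ keeps, for each UAV $i$, a set $\mathcal D_{iw}(k)$ of candidate trajectories (with metadata) together with a flag up-to-date/deprecated; elements are written $\tilde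 x_i(\cdot|k-1)$, $\tilde p_i(\cdot|k-1)$. Initially all trackers are empty and deprecated. At the start of round $k$, CU $w$ updates using the messages received in round $k-1$: (1) start from $\mathcal D_{iw}(k-1)$; for every UAV $i$ whose message was received, replace its tracker by the single stored trajectory whose metadata matches and mark that tracker up-to-date; (2) if some tracker then has more than one element, mark all trackers deprecated; (3) if fewer than $M$ CU messages were received, mark all trackers deprecated; (4) for every received CU message containing a newly computed trajectory for a UAV $i$, add it to $\mathcal D_{iw}(k)$. If all trackers are up-to-date, the CU runs a DMPC step: all such CUs compute the same set $\mathcal A_{ET}(k)$ of $M$ UAVs (highest priorities after max-consensus), CU $w$ selects the UAV at position $(k+w)\bmod M$ of $\mathcal A_{ET}(k)$ and, if that UAV's tracker has exactly one element, computes and broadcasts a new trajectory for it. Otherwise the CU is in message-loss-recovery mode: it computes no trajectory and instead (in alternate rounds) requests a UAV with a deprecated tracker to rebroadcast its current reference trajectory with metadata. *)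

theory Defs
  imports Main
begin

(* MLR-DMPC protocol model.
   UAVs are indexed by 1..N, compute units (CUs) by 1..M, rounds by k :: nat. *)

(* Metadata of a trajectory: the initial reference, or computed by CU w in round k. *)
datatype meta = Init | Comp nat nat

(* The type 'tr stands for the trajectory data
   \<hat>u_{i,w}(. | k) (and hence \<hat>x, \<hat>p) as computed; the reference followed in a
   later round is its time shift, which is fully determined by data and metadata. *)
type_synonym 'tr traj_rec = "meta \<times> 'tr"

datatype 'tr cu_msg = NewTraj nat 'tr | Request nat | Idle

(* Tracker state of one CU: the sets D_{iw} and the up-to-date flags (True = up-to-date). *)
type_synonym 'tr tracker_state = "(nat \<Rightarrow> 'tr traj_rec set) \<times> (nat \<Rightarrow> bool)"

(* An execution of the protocol (arbitrary message losses, arbitrary unspecified choices). *)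
record 'tr exec =
  uav_rec :: "nat \<Rightarrow> nat \<Rightarrow> 'tr traj_rec"          (* k j: trajectory (with metadata) UAV j follows in round k *)
  cu_msg :: "nat \<Rightarrow> nat \<Rightarrow> 'tr cu_msg"            (* k w: message broadcast by CU w in round k *)
  rcv_uav_at_cu :: "nat \<Rightarrow> nat \<Rightarrow> nat \<Rightarrow> bool"    (* k j w: UAV j's round-k message received by CU w *)
  rcv_cu_at_cu :: "nat \<Rightarrow> nat \<Rightarrow> nat \<Rightarrow> bool"     (* k w' w: CU w''s round-k message received by CU w *)
  rcv_cu_at_uav :: "nat \<Rightarrow> nat \<Rightarrow> nat \<Rightarrow> bool"    (* k w j: CU w's round-k message received by UAV j *)
  aet :: "nat \<Rightarrow> nat list"                        (* k: the ordered set A_ET(k) *)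

(* UAV j rebroadcasts its full current reference trajectory with metadata in round k
   iff it received a rebroadcast request in round k-1. *)
definition rebroadcast :: "nat \<Rightarrow> 'tr exec \<Rightarrow> nat \<Rightarrow> nat \<Rightarrow> bool" where
  "rebroadcast M E k j =
     (\<exists>k'. k = Suc k' \<and> (\<exists>w\<in>{1..M}. cu_msg E k' w = Request j \<and> rcv_cu_at_uav E k' w j))"

definition tracker_update ::
  "nat \<Rightarrow> nat \<Rightarrow> 'tr exec \<Rightarrow> nat \<Rightarrow> nat \<Rightarrow> 'tr tracker_state \<Rightarrow> 'tr tracker_state" where
  "tracker_update N M E k w S = (let
     D = fst S; F = snd S;
     heard = (\<lambda>i. i \<in> {1..N} \<and> rcv_uav_at_cu E k i w);
     r = (\<lambda>i. uav_rec E k i);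
     matches = (\<lambda>i. {x \<in> D i. fst x = fst (r i)});
     \<comment> \<open>step (1)\<close>
     D1 = (\<lambda>i. if heard i then
                 (if rebroadcast M E k i then {r i}
                  else if matches i \<noteq> {} then matches i else D i)
               else D i);
     F1 = (\<lambda>i. if heard i then (rebroadcast M E k i \<or> matches i \<noteq> {}) else F i);
     \<comment> \<open>steps (2) and (3)\<close>
     multi = (\<exists>i\<in>{1..N}. \<exists>a\<in>D1 i. \<exists>b\<in>D1 i. a \<noteq> b);
     heardC = {w'\<in>{1..M}. w' = w \<or> rcv_cu_at_cu E k w' w};
     F2 = (if multi \<or> card heardC < M then (\<lambda>i. False) else F1);
     \<comment> \<open>step (4)\<close>
     D2 = (\<lambda>i. D1 i \<union> {(Comp w' k, u) | w' u. w' \<in> heardC \<and> cu_msg E k w' = NewTraj i u})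
   in (D2, F2))"

(* trackers N M E k w: the trackers of CU w after the update procedure of round k. *)
primrec trackers :: "nat \<Rightarrow> nat \<Rightarrow> 'tr exec \<Rightarrow> nat \<Rightarrow> nat \<Rightarrow> 'tr tracker_state" where
  "trackers N M E 0 w = ((\<lambda>i. {}), (\<lambda>i. False))"
| "trackers N M E (Suc k) w = tracker_update N M E k w (trackers N M E k w)"

definition valid_exec :: "nat \<Rightarrow> nat \<Rightarrow> 'tr exec \<Rightarrow> bool" where
  "valid_exec N M E =
    ((\<forall>k. distinct (aet E k) \<and> length (aet E k) = M \<and> set (aet E k) \<subseteq> {1..N}) \<and>
     (\<forall>j\<in>{1..N}. fst (uav_rec E 0 j) = Init) \<and>
     (\<forall>k. \<forall>j\<in>{1..N}.
        (let R = {(w, u). w \<in> {1..M} \<and> cu_msg E k w = NewTraj j u \<and> rcv_cu_at_uav E k w j} in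
          (R = {} \<longrightarrow> uav_rec E (Suc k) j = uav_rec E k j) \<and>
          (R \<noteq> {} \<longrightarrow> (\<exists>(w, u)\<in>R. uav_rec E (Suc k) j = (Comp w k, u))))) \<and>
     (\<forall>k. \<forall>w\<in>{1..M}.
        (let D = fst (trackers N M E k w); F = snd (trackers N M E k w) in
          if (\<forall>i\<in>{1..N}. F i) then
            (let i = aet E k ! ((k + w) mod M) in
              if (\<exists>x. D i = {x}) then (\<exists>u. cu_msg E k w = NewTraj i u)
              else cu_msg E k w = Idle)
          else (cu_msg E k w = Idle \<or>
                (even k \<and> (\<exists>i\<in>{1..N}. \<not> F i \<and> cu_msg E k w = Request i))))))"

end

theory Submission
  imports Defs
begin

(* Every record held by a UAV or stored in a tracker is genuine: its data is the one named
   by its metadata, namely the initial reference or the trajectory broadcast by the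
   computing CU in the stated round. Metadata therefore identify a genuine record uniquely,
   so the record a CU selects by matching a UAV's metadata is the UAV's true reference.
   An up-to-date tracker was either just matched in this way or inherited unchanged from
   an up-to-date tracker of a round without news from the UAV; and since up-to-date also
   means that the messages of all M CUs were received, every trajectory the UAV may have
   adopted in the meantime was added to the tracker as well. *)

definition genuine_rec :: "'tr exec \<Rightarrow> nat \<Rightarrow> 'tr traj_rec \<Rightarrow> bool" where
  "genuine_rec E i x = (case fst x of
      Init \<Rightarrow> x = uav_rec E 0 i
    | Comp w k \<Rightarrow> cu_msg E k w = NewTraj i (snd x))"

lemma genuine_rec_eqI:
  assumes "genuine_rec E i x" "genuine_rec E i y" "fst x = fst y"
  shows "x = y"
proof (cases "fst x")
  case Init
  with assms show ?thesis
    by (simp add: genuine_rec_def)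
next
  case (Comp w k)
  moreover from Comp assms(3) have "fst y = Comp w k"
    by simp
  ultimately show ?thesis
    using assms(1,2) by (simp add: genuine_rec_def prod_eq_iff)
qed

lemma genuine_rec_Comp: "cu_msg E k w = NewTraj i u \<Longrightarrow> genuine_rec E i (Comp w k, u)"
  by (simp add: genuine_rec_def)

lemma uav_rec_0:
  assumes "valid_exec N M E" "j \<in> {1..N}"
  shows "fst (uav_rec E 0 j) = Init"
  using assms by (simp add: valid_exec_def)

lemma uav_rec_SucE:
  assumes "valid_exec N M E" "j \<in> {1..N}"
  obtains "uav_rec E (Suc k) j = uav_rec E k j"
  | w u where "w \<in> {1..M}" "cu_msg E k w = NewTraj j u" "uav_rec E (Suc k) j = (Comp w k, u)"
proof -
  let ?R = "{(w, u). w \<in> {1..M} \<and> cu_msg E k w = NewTraj j u \<and> rcv_cu_at_uav E k w j}"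
  have "(?R = {} \<longrightarrow> uav_rec E (Suc k) j = uav_rec E k j) \<and>
        (?R \<noteq> {} \<longrightarrow> (\<exists>(w, u)\<in>?R. uav_rec E (Suc k) j = (Comp w k, u)))"
    using assms unfolding valid_exec_def Let_def by blast
  then show thesis
    using that by (cases "?R = {}") auto
qed

lemma genuine_uav_rec:
  assumes "valid_exec N M E" "j \<in> {1..N}"
  shows "genuine_rec E j (uav_rec E k j)"
proof (induction k)
  case 0
  show ?case
    using uav_rec_0[OF assms] by (simp add: genuine_rec_def)
next
  case (Suc k)
  from assms show ?case
    by (cases rule: uav_rec_SucE[where k = k]) (simp_all add: Suc.IH genuine_rec_Comp)
qed

lemma tracker_update_memD:
  assumes "x \<in> fst (tracker_update N M E k w (D, F)) i"
  shows "x \<in> D i \<or> (i \<in> {1..N} \<and> x = uav_rec E k i) \<or>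
    (\<exists>w' u. x = (Comp w' k, u) \<and> cu_msg E k w' = NewTraj i u)"
  using assms unfolding tracker_update_def Let_def by (auto split: if_splits)

lemma tracker_update_memI:
  shows tracker_update_mem_unheard:
    "\<lbrakk>x \<in> D i; \<not> (i \<in> {1..N} \<and> rcv_uav_at_cu E k i w)\<rbrakk>
      \<Longrightarrow> x \<in> fst (tracker_update N M E k w (D, F)) i"
  and tracker_update_mem_rebroadcast:
    "\<lbrakk>i \<in> {1..N}; rcv_uav_at_cu E k i w; rebroadcast M E k i\<rbrakk>
      \<Longrightarrow> uav_rec E k i \<in> fst (tracker_update N M E k w (D, F)) i"
  and tracker_update_mem_match:
    "\<lbrakk>i \<in> {1..N}; rcv_uav_at_cu E k i w; \<not> rebroadcast M E k i;
      x \<in> D i; fst x = fst (uav_rec E k i)\<rbrakk>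
      \<Longrightarrow> x \<in> fst (tracker_update N M E k w (D, F)) i"
  and tracker_update_mem_new:
    "\<lbrakk>w' \<in> {1..M}; w' = w \<or> rcv_cu_at_cu E k w' w; cu_msg E k w' = NewTraj i u\<rbrakk>
      \<Longrightarrow> (Comp w' k, u) \<in> fst (tracker_update N M E k w (D, F)) i"
  unfolding tracker_update_def Let_def by auto

lemma tracker_update_up_to_dateD:
  assumes "snd (tracker_update N M E k w (D, F)) i"
  shows tracker_update_up_to_date_all_cus_heard:
      "w' \<in> {1..M} \<Longrightarrow> w' = w \<or> rcv_cu_at_cu E k w' w"
    and tracker_update_up_to_date_heard:
      "\<lbrakk>i \<in> {1..N}; rcv_uav_at_cu E k i w\<rbrakk>
        \<Longrightarrow> rebroadcast M E k i \<or> (\<exists>x\<in>D i. fst x = fst (uav_rec E k i))"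
    and tracker_update_up_to_date_unheard:
      "\<not> (i \<in> {1..N} \<and> rcv_uav_at_cu E k i w) \<Longrightarrow> F i"
proof -
  let ?heardC = "{w' \<in> {1..M}. w' = w \<or> rcv_cu_at_cu E k w' w}"
  have sub: "?heardC \<subseteq> {1..M}"
    by blast
  have "\<not> card ?heardC < M"
    using assms unfolding tracker_update_def Let_def by (auto split: if_splits)
  with card_mono[OF _ sub] have "?heardC = {1..M}"
    by (intro card_subset_eq[OF _ sub]) simp_all
  then show "w' \<in> {1..M} \<Longrightarrow> w' = w \<or> rcv_cu_at_cu E k w' w"
    by blast
  show "\<lbrakk>i \<in> {1..N}; rcv_uav_at_cu E k i w\<rbrakk>
      \<Longrightarrow> rebroadcast M E k i \<or> (\<exists>x\<in>D i. fst x = fst (uav_rec E k i))"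
    and "\<not> (i \<in> {1..N} \<and> rcv_uav_at_cu E k i w) \<Longrightarrow> F i"
    using assms unfolding tracker_update_def Let_def by (fastforce split: if_splits)+
qed

lemma genuine_tracker_rec:
  assumes "valid_exec N M E" "x \<in> fst (trackers N M E k w) i"
  shows "genuine_rec E i x"
  using assms(2)
proof (induction k arbitrary: x)
  case 0
  then show ?case by simp
next
  case (Suc k)
  obtain D F where S: "trackers N M E k w = (D, F)"
    by fastforce
  from Suc.prems S have "x \<in> fst (tracker_update N M E k w (D, F)) i"
    by simp
  then show ?case
    using Suc.IH S genuine_uav_rec[OF assms(1)] genuine_rec_Comp
    by (metis fst_conv tracker_update_memD)
qed

lemma tracker_update_keeps_uav_rec:
  assumes "valid_exec N M E" "i \<in> {1..N}"
    and genuine: "\<And>x. x \<in> D i \<Longrightarrow> genuine_rec E i x"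
    and current: "F i \<Longrightarrow> uav_rec E k i \<in> D i"
    and up_to_date: "snd (tracker_update N M E k w (D, F)) i"
  shows "uav_rec E k i \<in> fst (tracker_update N M E k w (D, F)) i"
proof (cases "rcv_uav_at_cu E k i w")
  case heard: True
  show ?thesis
  proof (cases "rebroadcast M E k i")
    case True
    with assms(2) heard show ?thesis
      by (rule tracker_update_mem_rebroadcast)
  next
    case no_rebroadcast: False
    with tracker_update_up_to_date_heard[OF up_to_date assms(2) heard]
    obtain x where x: "x \<in> D i" "fst x = fst (uav_rec E k i)"
      by blast
    have "x = uav_rec E k i"
      using genuine[OF x(1)] genuine_uav_rec[OF assms(1,2)] x(2) by (rule genuine_rec_eqI)
    with x assms(2) heard no_rebroadcast show ?thesis
      by (metis tracker_update_mem_match)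
  qed
next
  case False
  then have unheard: "\<not> (i \<in> {1..N} \<and> rcv_uav_at_cu E k i w)"
    by blast
  with current tracker_update_up_to_date_unheard[OF up_to_date] show ?thesis
    by (blast intro: tracker_update_mem_unheard)
qed

lemma up_to_date_tracker_has_uav_rec:
  assumes "valid_exec N M E" "i \<in> {1..N}" "snd (trackers N M E k w) i"
  shows "uav_rec E k i \<in> fst (trackers N M E k w) i"
  using assms(3)
proof (induction k)
  case 0
  then show ?case by simp
next
  case (Suc k)
  obtain D F where S: "trackers N M E k w = (D, F)"
    by fastforce
  from Suc.prems S have up_to_date: "snd (tracker_update N M E k w (D, F)) i"
    by simp
  from assms(1,2) show ?case
  proof (cases rule: uav_rec_SucE[where k = k])
    case 1
    have genuine: "\<And>x. x \<in> D i \<Longrightarrow> genuine_rec E i x"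
      using genuine_tracker_rec[OF assms(1), of _ k w i] S by simp
    have current: "F i \<Longrightarrow> uav_rec E k i \<in> D i"
      using Suc.IH S by simp
    have "uav_rec E k i \<in> fst (tracker_update N M E k w (D, F)) i"
      using assms(1,2) genuine current up_to_date by (rule tracker_update_keeps_uav_rec)
    with 1 S show ?thesis
      by simp
  next
    case (2 w' u)
    with S show ?thesis
      by (simp add: tracker_update_mem_new tracker_update_up_to_date_all_cus_heard[OF up_to_date])
  qed
qed

theorem lemma1:
  fixes N M :: nat and E :: "'tr exec" and w i k :: nat
  assumes "1 < M" and "M < N"
    and "valid_exec N M E"
    and "w \<in> {1..M}" and "i \<in> {1..N}"
    and "snd (trackers N M E k w) i"
  shows "uav_rec E k i \<in> fst (trackers N M E k w) i"
  using assms(3,5,6) by (rule up_to_date_tracker_has_uav_rec)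

end
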